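(* Let $A\in\mathbb{C}^{m\times n}$ have rank $r$, $B\in\mathbb{C}^{m\times n}$ have rank $s$, and $E=B-A$. Then $$\|B^{\dagger}-A^{\dagger}\|_{F}^{2}\leq\min\big\{\beta_{1}+\|B^{\dagger}EA^{\dagger}\|_{F}^{2},\ \beta_{2}+\|A^{\dagger}EB^{\dagger}\|_{F}^{2}\big\},$$ where $$\beta_{1}:=\|A^{\dagger}\|_{2}^{4}\big(\|E\|_{F}^{2}-\|EB^{\dagger}B\|_{F}^{2}\big)+\|B^{\dagger}\|_{2}^{4}\big(\|E\|_{F}^{2}-\|AA^{\dagger}E\|_{F}^{2}\big),$$ $$\beta_{2}:=\|A^{\dagger}\|_{2}^{4}\big(\|E\|_{F}^{2}-\|BB^{\dagger}E\|_{F}^{2}\big)+\|B^{\dagger}\|_{2}^{4}\big(\|E\|_{F}^{2}-\|EA^{\dagger}A\|_{F}^{2}\big).$$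
   Context: $M^{\dagger}$ denotes the Moore–Penrose inverse of $M$, $\|\cdot\|_{2}$ the spectral norm and $\|\cdot\|_{F}$ the Frobenius norm. *)

theory Defs
  imports "HOL-Analysis.Analysis"
begin

text \<open>Complex m x n matrices are rendered as complex^'n^'m (rows indexed by 'm).\<close>

definition conj_transpose :: "complex^'n^'m \<Rightarrow> complex^'m^'n" where
  "conj_transpose A = (\<chi> i j. cnj (A $ j $ i))"

definition mp_inverse :: "complex^'n^'m \<Rightarrow> complex^'m^'n" where
  "mp_inverse A = (THE X. A ** X ** A = A \<and> X ** A ** X = X \<and>
      conj_transpose (A ** X) = A ** X \<and> conj_transpose (X ** A) = X ** A)"

definition frob_norm :: "complex^'n^'m \<Rightarrow> real" where
  "frob_norm A = sqrt (\<Sum>i\<in>UNIV. \<Sum>j\<in>UNIV. (cmod (A $ i $ j))\<^sup>2)"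

definition spec_norm :: "complex^'n^'m \<Rightarrow> real" where
  "spec_norm A = onorm (\<lambda>x::complex^'n. A *v x)"

end

theory Submission
  imports Defs
begin

text \<open>
  Write \<open>X = A\<^sup>\<dagger>\<close>, \<open>Y = B\<^sup>\<dagger>\<close> and \<open>D = Y - X\<close>. The orthogonal projectors \<open>P = Y B\<close> and \<open>Q = A X\<close>
  split \<open>D = P D Q + P D (I - Q) + (I - P) D\<close> into three Frobenius-orthogonal pieces. The
  Penrose equations turn them into \<open>P D Q = -Y E X\<close>,
  \<open>P D (I - Q) = Y Y\<^sup>H ((I - Q) E)\<^sup>H\<close> and \<open>(I - P) D = (E (I - P))\<^sup>H X\<^sup>H X\<close>, so the last two
  are bounded by \<open>\<parallel>Y\<parallel>\<^sub>2\<^sup>2 \<parallel>(I - Q) E\<parallel>\<^sub>F\<close> and \<open>\<parallel>X\<parallel>\<^sub>2\<^sup>2 \<parallel>E (I - P)\<parallel>\<^sub>F\<close>, and Pythagoras gives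
  \<open>\<parallel>(I - Q) E\<parallel>\<^sub>F\<^sup>2 = \<parallel>E\<parallel>\<^sub>F\<^sup>2 - \<parallel>Q E\<parallel>\<^sub>F\<^sup>2\<close>. This is the first bound; the second is the first with
  the roles of \<open>A\<close> and \<open>B\<close> exchanged.
\<close>

notation conj_transpose ("_\<^sup>H" [1000] 999)

lemma conj_transpose_nth [simp]: "M\<^sup>H $ i $ j = cnj (M $ j $ i)"
  by (simp add: conj_transpose_def)

lemma conj_transpose_conj_transpose [simp]: "(M\<^sup>H)\<^sup>H = M"
  by (simp add: vec_eq_iff)

lemma conj_transpose_matrix_mult: "(M ** N)\<^sup>H = N\<^sup>H ** M\<^sup>H"
  by (simp add: vec_eq_iff matrix_matrix_mult_def mult.commute)

lemma conj_transpose_diff: "(M - N)\<^sup>H = M\<^sup>H - N\<^sup>H"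
  by (simp add: vec_eq_iff)

lemma conj_transpose_mat_1 [simp]: "(mat 1)\<^sup>H = mat 1"
  by (simp add: vec_eq_iff mat_def)

lemma matrix_diff_ldistrib: "(M :: 'a::ring_1^'n^'m) ** (N - K) = M ** N - M ** K"
  by (simp add: vec_eq_iff matrix_matrix_mult_def algebra_simps sum_subtractf)

lemma matrix_diff_rdistrib: "((N :: 'a::ring_1^'n^'m) - K) ** M = N ** M - K ** M"
  by (simp add: vec_eq_iff matrix_matrix_mult_def algebra_simps sum_subtractf)

lemma matrix_mul_uminus_left: "(- (N :: 'a::ring_1^'n^'m)) ** M = - (N ** M)"
  by (simp add: vec_eq_iff matrix_matrix_mult_def sum_negf)

lemma matrix_mul_uminus_right: "(M :: 'a::ring_1^'n^'m) ** (- N) = - (M ** N)"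
  by (simp add: vec_eq_iff matrix_matrix_mult_def sum_negf)

lemma matrix_eq_columnI: "(\<And>j. column j M = column j N) \<Longrightarrow> M = N"
  by (simp add: vec_eq_iff column_def)

lemma column_matrix_mult: "column j (M ** N) = M *v column j N"
  by (simp add: vec_eq_iff column_def matrix_matrix_mult_def matrix_vector_mult_def)

lemma column_diff: "column j (M - N) = column j M - column j N"
  by (simp add: vec_eq_iff column_def)

lemma inner_conj_transpose: "inner (M *v x) y = inner x (M\<^sup>H *v y)"
proof -
  have inner_complex: "inner a b = Re (a * cnj b)" for a b :: complex
    by (simp add: inner_complex_def)
  have "inner (M *v x) y = (\<Sum>i\<in>UNIV. \<Sum>j\<in>UNIV. Re (M$i$j * x$j * cnj (y$i)))"
    by (simp add: inner_vec_def matrix_vector_mult_def inner_complex sum_distrib_right Re_sum)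
  also have "\<dots> = (\<Sum>j\<in>UNIV. \<Sum>i\<in>UNIV. Re (M$i$j * x$j * cnj (y$i)))"
    by (rule sum.swap)
  also have "\<dots> = inner x (M\<^sup>H *v y)"
    by (simp add: inner_vec_def matrix_vector_mult_def inner_complex sum_distrib_left Re_sum
        mult_ac)
  finally show ?thesis .
qed

lemma frob_norm_power2: "(frob_norm M)\<^sup>2 = (\<Sum>i\<in>UNIV. \<Sum>j\<in>UNIV. (cmod (M$i$j))\<^sup>2)"
  unfolding frob_norm_def by (simp add: sum_nonneg)

lemma frob_norm_nonneg: "frob_norm M \<ge> 0"
  unfolding frob_norm_def by (simp add: sum_nonneg)

lemma frob_norm_power2_columns: "(frob_norm M)\<^sup>2 = (\<Sum>j\<in>UNIV. (norm (column j M))\<^sup>2)"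
  unfolding frob_norm_power2
  by (subst sum.swap) (simp add: norm_vec_def L2_set_def sum_nonneg column_def)

lemma frob_norm_conj_transpose [simp]: "frob_norm (M\<^sup>H) = frob_norm M"
  unfolding frob_norm_def by (subst sum.swap) simp

lemma frob_norm_uminus [simp]: "frob_norm (- M) = frob_norm M"
  by (simp add: frob_norm_def)

lemma frob_norm_minus_commute: "frob_norm (M - N) = frob_norm (N - M)"
  by (metis frob_norm_uminus minus_diff_eq)

lemma spec_norm_bound: "norm (M *v x) \<le> spec_norm M * norm x"
  unfolding spec_norm_def by (rule onorm) (simp add: linear_conv_bounded_linear)

lemma spec_norm_nonneg: "spec_norm M \<ge> 0"
  unfolding spec_norm_def by (rule onorm_pos_le) (simp add: linear_conv_bounded_linear)

lemma spec_norm_conj_transpose_le: "spec_norm (M\<^sup>H) \<le> spec_norm M"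
  unfolding spec_norm_def[of "M\<^sup>H"]
proof (rule onorm_le)
  fix x
  have "(norm (M\<^sup>H *v x))\<^sup>2 = inner x (M *v (M\<^sup>H *v x))"
    by (metis power2_norm_eq_inner inner_conj_transpose inner_commute
        conj_transpose_conj_transpose)
  also have "\<dots> \<le> norm x * (spec_norm M * norm (M\<^sup>H *v x))"
    by (meson Cauchy_Schwarz_ineq2 abs_le_D1 mult_left_mono norm_ge_zero order_trans
        spec_norm_bound)
  finally have "norm (M\<^sup>H *v x) * norm (M\<^sup>H *v x)
      \<le> (spec_norm M * norm x) * norm (M\<^sup>H *v x)"
    by (simp add: power2_eq_square mult_ac)
  then show "norm (M\<^sup>H *v x) \<le> spec_norm M * norm x"
    by (cases "norm (M\<^sup>H *v x) = 0") (auto simp: spec_norm_nonneg)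
qed

lemma spec_norm_conj_transpose [simp]: "spec_norm (M\<^sup>H) = spec_norm M"
  using spec_norm_conj_transpose_le[of M] spec_norm_conj_transpose_le[of "M\<^sup>H"] by simp

lemma frob_norm_matrix_mult_le: "frob_norm (M ** N) \<le> spec_norm M * frob_norm N"
proof -
  have "(frob_norm (M ** N))\<^sup>2 = (\<Sum>j\<in>UNIV. (norm (M *v column j N))\<^sup>2)"
    by (simp add: frob_norm_power2_columns column_matrix_mult)
  also have "\<dots> \<le> (\<Sum>j\<in>UNIV. (spec_norm M * norm (column j N))\<^sup>2)"
    by (intro sum_mono power_mono spec_norm_bound norm_ge_zero)
  also have "\<dots> = (spec_norm M * frob_norm N)\<^sup>2"
    by (simp add: frob_norm_power2_columns power_mult_distrib sum_distrib_left)
  finally show ?thesis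
    by (meson mult_nonneg_nonneg power2_le_imp_le spec_norm_nonneg frob_norm_nonneg)
qed

lemma frob_norm_gram_mult_le: "frob_norm (M ** M\<^sup>H ** N) \<le> (spec_norm M)\<^sup>2 * frob_norm N"
proof -
  have "frob_norm (M ** M\<^sup>H ** N) \<le> spec_norm M * frob_norm (M\<^sup>H ** N)"
    unfolding matrix_mul_assoc[symmetric] by (rule frob_norm_matrix_mult_le)
  also have "\<dots> \<le> spec_norm M * (spec_norm (M\<^sup>H) * frob_norm N)"
    by (intro mult_left_mono frob_norm_matrix_mult_le spec_norm_nonneg)
  finally show ?thesis
    by (simp add: power2_eq_square)
qed

lemma frob_norm_mult_gram_le: "frob_norm (N ** M\<^sup>H ** M) \<le> frob_norm N * (spec_norm M)\<^sup>2"
proof -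
  have "(N ** M\<^sup>H ** M)\<^sup>H = M\<^sup>H ** (M\<^sup>H)\<^sup>H ** N\<^sup>H"
    by (simp add: conj_transpose_matrix_mult matrix_mul_assoc)
  then show ?thesis
    using frob_norm_gram_mult_le[of "M\<^sup>H" "N\<^sup>H"]
    by (metis frob_norm_conj_transpose spec_norm_conj_transpose mult.commute)
qed

definition is_orth_proj :: "complex^'n^'n \<Rightarrow> bool" where
  "is_orth_proj P \<longleftrightarrow> P\<^sup>H = P \<and> P ** P = P"

lemma frob_norm_power2_orth_proj_left:
  assumes "is_orth_proj P"
  shows "(frob_norm M)\<^sup>2 = (frob_norm (P ** M))\<^sup>2 + (frob_norm ((mat 1 - P) ** M))\<^sup>2"
proof -
  have P: "P\<^sup>H = P" "P ** P = P"
    using assms unfolding is_orth_proj_def by auto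
  have "(norm c)\<^sup>2 = (norm (P *v c))\<^sup>2 + (norm (c - P *v c))\<^sup>2" for c
  proof -
    have "inner (P *v c) (c - P *v c) = inner c (P *v c - (P ** P) *v c)"
      by (metis P(1) inner_conj_transpose matrix_vector_mul_assoc matrix_vector_mult_diff_distrib)
    then have "orthogonal (P *v c) (c - P *v c)"
      by (simp add: orthogonal_def P(2))
    from norm_add_Pythagorean[OF this] show ?thesis
      by simp
  qed
  then show ?thesis
    unfolding frob_norm_power2_columns column_matrix_mult matrix_diff_rdistrib matrix_mul_lid
      column_diff sum.distrib[symmetric] by (intro sum.cong refl)
qed

lemma frob_norm_power2_orth_proj_right:
  assumes "is_orth_proj P"
  shows "(frob_norm M)\<^sup>2 = (frob_norm (M ** P))\<^sup>2 + (frob_norm (M ** (mat 1 - P)))\<^sup>2"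
proof -
  have "P\<^sup>H = P"
    using assms unfolding is_orth_proj_def by simp
  then have "(M ** P)\<^sup>H = P ** M\<^sup>H" "(M ** (mat 1 - P))\<^sup>H = (mat 1 - P) ** M\<^sup>H"
    by (simp_all add: conj_transpose_matrix_mult conj_transpose_diff)
  then show ?thesis
    using frob_norm_power2_orth_proj_left[OF assms, of "M\<^sup>H"]
    by (metis frob_norm_conj_transpose)
qed

lemma normal_equation_solvable: "\<exists>z. (A\<^sup>H ** A) *v z = A\<^sup>H *v y"
proof -
  define S where "S = range (\<lambda>z. (A\<^sup>H ** A) *v z)"
  have "subspace S"
    unfolding S_def by (rule linear_subspace_image[OF matrix_vector_mul_linear subspace_UNIV])
  then have span_S: "span S = S"
    by (rule span_eq_iff[THEN iffD2])
  obtain u w where u: "u \<in> S" and w: "\<And>t. t \<in> S \<Longrightarrow> orthogonal w t"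
    and uw: "A\<^sup>H *v y = u + w"
    using orthogonal_subspace_decomp_exists[of S "A\<^sup>H *v y"] unfolding span_S by blast
  have "inner (A *v w) (A *v w) = inner w ((A\<^sup>H ** A) *v w)"
    by (simp add: inner_conj_transpose matrix_vector_mul_assoc)
  also have "\<dots> = 0"
    using w[of "(A\<^sup>H ** A) *v w"] by (simp add: S_def orthogonal_def)
  finally have "A *v w = 0"
    by simp
  then have "inner w (A\<^sup>H *v y) = 0"
    by (metis inner_conj_transpose inner_zero_left conj_transpose_conj_transpose)
  moreover have "inner w u = 0"
    using w[OF u] by (simp add: orthogonal_def)
  ultimately have "w = 0"
    by (simp add: uw inner_add_right)
  then show ?thesis
    using u uw by (auto simp: S_def)
qed

lemma normal_equation_matrix_solvable: "\<exists>Z. A\<^sup>H ** A ** Z = A\<^sup>H"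
proof -
  have "\<forall>j. \<exists>z. (A\<^sup>H ** A) *v z = A\<^sup>H *v axis j 1"
    using normal_equation_solvable by blast
  then obtain z where z: "\<And>j. (A\<^sup>H ** A) *v z j = A\<^sup>H *v axis j 1"
    by metis
  define Z where "Z = (\<chi> i j. z j $ i)"
  have "column j (A\<^sup>H ** A ** Z) = column j (A\<^sup>H)" for j
  proof -
    have "column j Z = z j" "column j (A\<^sup>H) = A\<^sup>H *v axis j 1"
      by (simp_all add: Z_def column_def vec_eq_iff matrix_vector_mult_def axis_def
          if_distrib cong: if_cong)
    then show ?thesis
      by (simp add: column_matrix_mult z)
  qed
  then show ?thesis
    by (auto intro: matrix_eq_columnI)
qed

lemma hermitian_if_gram_eq: "P\<^sup>H ** P = P \<Longrightarrow> P\<^sup>H = P"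
  by (metis conj_transpose_conj_transpose conj_transpose_matrix_mult)

lemma normal_equation_orth_proj:
  assumes Z: "A\<^sup>H ** A ** Z = A\<^sup>H"
  shows "is_orth_proj (A ** Z)" and "A ** Z ** A = A"
proof -
  have ZA: "(A ** Z)\<^sup>H ** A = A"
    using arg_cong[OF Z, of conj_transpose] by (simp add: conj_transpose_matrix_mult matrix_mul_assoc)
  then have "(A ** Z)\<^sup>H ** (A ** Z) = A ** Z"
    by (simp add: matrix_mul_assoc)
  then have herm: "(A ** Z)\<^sup>H = A ** Z"
    by (rule hermitian_if_gram_eq)
  with ZA show "A ** Z ** A = A"
    by simp
  then have "A ** Z ** (A ** Z) = A ** Z"
    by (simp add: matrix_mul_assoc)
  with herm show "is_orth_proj (A ** Z)"
    by (simp add: is_orth_proj_def)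
qed

definition is_mp_inverse :: "complex^'n^'m \<Rightarrow> complex^'m^'n \<Rightarrow> bool" where
  "is_mp_inverse A X \<longleftrightarrow> A ** X ** A = A \<and> X ** A ** X = X \<and>
      (A ** X)\<^sup>H = A ** X \<and> (X ** A)\<^sup>H = X ** A"

lemma is_mp_inverse_exists: "\<exists>X. is_mp_inverse A X"
proof -
  obtain Z where Z: "A\<^sup>H ** A ** Z = A\<^sup>H"
    using normal_equation_matrix_solvable by blast
  obtain W where W: "(A\<^sup>H)\<^sup>H ** A\<^sup>H ** W = (A\<^sup>H)\<^sup>H"
    using normal_equation_matrix_solvable by blast
  define R where "R = A\<^sup>H ** W"
  \<comment> \<open>\<open>A Z\<close> and \<open>R\<close> are the orthogonal projectors onto the ranges of \<open>A\<close> and \<open>A\<^sup>H\<close>.\<close>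
  have AZ: "is_orth_proj (A ** Z)" "A ** Z ** A = A"
    using normal_equation_orth_proj[OF Z] by auto
  have R: "is_orth_proj R" "R ** A\<^sup>H = A\<^sup>H"
    using normal_equation_orth_proj[OF W] by (auto simp: R_def)
  have R_herm: "R\<^sup>H = R" and RR: "R ** R = R"
    using R(1) by (auto simp: is_orth_proj_def)
  have AR: "A ** R = A"
    using arg_cong[OF R(2), of conj_transpose] by (simp add: conj_transpose_matrix_mult R_herm)
  have RZA: "R ** Z ** A = R"
  proof -
    have "R = W\<^sup>H ** A"
      using R_herm by (metis R_def conj_transpose_conj_transpose conj_transpose_matrix_mult)
    then show ?thesis
      by (metis AZ(2) matrix_mul_assoc)
  qed
  have "is_mp_inverse A (R ** Z)"
    unfolding is_mp_inverse_def
    using AZ AR RR RZA R_herm by (auto simp: is_orth_proj_def matrix_mul_assoc)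
  then show ?thesis
    by blast
qed

lemma is_mp_inverse_conj_transpose_absorb:
  assumes "is_mp_inverse A X"
  shows "A\<^sup>H ** A ** X = A\<^sup>H" and "X ** A ** A\<^sup>H = A\<^sup>H"
    and "X ** X\<^sup>H ** A\<^sup>H = X" and "A\<^sup>H ** X\<^sup>H ** X = X"
proof -
  have X: "A ** X ** A = A" "X ** A ** X = X" "(A ** X)\<^sup>H = A ** X" "(X ** A)\<^sup>H = X ** A"
    using assms unfolding is_mp_inverse_def by auto
  have "A\<^sup>H ** A ** X = A\<^sup>H ** (A ** X)\<^sup>H"
    by (simp add: X(3) matrix_mul_assoc)
  then show "A\<^sup>H ** A ** X = A\<^sup>H"
    by (metis X(1) conj_transpose_matrix_mult)
  have "X ** A ** A\<^sup>H = (X ** A)\<^sup>H ** A\<^sup>H"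
    by (simp add: X(4))
  then show "X ** A ** A\<^sup>H = A\<^sup>H"
    by (metis X(1) conj_transpose_matrix_mult matrix_mul_assoc)
  have "X ** X\<^sup>H ** A\<^sup>H = X ** (A ** X)\<^sup>H"
    by (simp add: conj_transpose_matrix_mult matrix_mul_assoc)
  then show "X ** X\<^sup>H ** A\<^sup>H = X"
    by (simp add: X(2,3) matrix_mul_assoc)
  have "A\<^sup>H ** X\<^sup>H ** X = (X ** A)\<^sup>H ** X"
    by (simp add: conj_transpose_matrix_mult)
  then show "A\<^sup>H ** X\<^sup>H ** X = X"
    by (simp add: X(2,4))
qed

lemma is_mp_inverse_unique:
  assumes "is_mp_inverse A X" and "is_mp_inverse A Y"
  shows "X = Y"
proof -
  have X: "A ** X ** A = A" "X ** A ** X = X" "(A ** X)\<^sup>H = A ** X" "(X ** A)\<^sup>H = X ** A"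
    and Y: "A ** Y ** A = A" "Y ** A ** Y = Y" "(A ** Y)\<^sup>H = A ** Y" "(Y ** A)\<^sup>H = Y ** A"
    using assms unfolding is_mp_inverse_def by auto
  have "X = X ** X\<^sup>H ** (A ** Y ** A)\<^sup>H"
    using assms(1) by (simp add: Y(1) is_mp_inverse_conj_transpose_absorb)
  also have "\<dots> = X ** (A ** X)\<^sup>H ** (A ** Y)\<^sup>H"
    by (simp add: conj_transpose_matrix_mult matrix_mul_assoc)
  also have "\<dots> = X ** A ** Y"
    by (simp only: X(3) Y(3) X(2) matrix_mul_assoc)
  also have "\<dots> = X ** A ** (Y ** A ** Y)"
    by (simp only: Y(2))
  also have "\<dots> = (X ** A)\<^sup>H ** (Y ** A)\<^sup>H ** Y"
    by (simp only: X(4) Y(4) matrix_mul_assoc)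
  also have "\<dots> = (A ** X ** A)\<^sup>H ** Y\<^sup>H ** Y"
    by (simp add: conj_transpose_matrix_mult matrix_mul_assoc)
  also have "\<dots> = Y"
    using assms(2) by (simp add: X(1) is_mp_inverse_conj_transpose_absorb)
  finally show ?thesis .
qed

lemma is_mp_inverse_mp_inverse: "is_mp_inverse A (mp_inverse A)"
proof -
  have "\<exists>!X. is_mp_inverse A X"
    using is_mp_inverse_exists is_mp_inverse_unique by blast
  then show ?thesis
    unfolding mp_inverse_def is_mp_inverse_def[symmetric] by (rule theI')
qed

lemma is_mp_inverse_orth_proj:
  assumes "is_mp_inverse A X"
  shows "is_orth_proj (A ** X)" and "is_orth_proj (X ** A)"
  using assms by (auto simp: is_mp_inverse_def is_orth_proj_def matrix_mul_assoc)

lemma is_mp_inverse_diff_blocks: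
  assumes "is_mp_inverse A X" and "is_mp_inverse B Y"
  shows "Y ** B ** (Y - X) ** (A ** X) = - (Y ** (B - A) ** X)"
    and "Y ** B ** (Y - X) ** (mat 1 - A ** X) = Y ** (mat 1 - A ** X)"
    and "(mat 1 - Y ** B) ** (Y - X) = - ((mat 1 - Y ** B) ** X)"
proof -
  have X: "X ** A ** X = X" and Y: "Y ** B ** Y = Y"
    using assms unfolding is_mp_inverse_def by auto
  have YBD: "Y ** B ** (Y - X) = Y - Y ** B ** X"
    by (simp add: matrix_diff_ldistrib Y)
  have "Y ** B ** (Y - X) ** (A ** X) = Y ** A ** X - Y ** B ** (X ** A ** X)"
    by (simp add: YBD matrix_diff_rdistrib matrix_mul_assoc)
  then show "Y ** B ** (Y - X) ** (A ** X) = - (Y ** (B - A) ** X)"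
    by (simp add: X matrix_diff_ldistrib matrix_diff_rdistrib)
  have "X ** (mat 1 - A ** X) = 0"
    by (simp add: matrix_diff_ldistrib matrix_mul_assoc X)
  moreover have "Y ** B ** (Y - X) ** (mat 1 - A ** X)
      = Y ** (mat 1 - A ** X) - Y ** B ** (X ** (mat 1 - A ** X))"
    by (simp only: YBD matrix_diff_rdistrib matrix_mul_assoc)
  ultimately show "Y ** B ** (Y - X) ** (mat 1 - A ** X) = Y ** (mat 1 - A ** X)"
    by simp
  show "(mat 1 - Y ** B) ** (Y - X) = - ((mat 1 - Y ** B) ** X)"
    by (simp add: matrix_diff_ldistrib matrix_diff_rdistrib Y)
qed

lemma is_mp_inverse_defects:
  assumes "is_mp_inverse A X" and "is_mp_inverse B Y"
  shows "Y ** (mat 1 - A ** X) = Y ** Y\<^sup>H ** ((mat 1 - A ** X) ** (B - A))\<^sup>H"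
    and "(mat 1 - Y ** B) ** X = - (((B - A) ** (mat 1 - Y ** B))\<^sup>H ** X\<^sup>H ** X)"
proof -
  note absorb_A = is_mp_inverse_conj_transpose_absorb[OF assms(1)]
    and absorb_B = is_mp_inverse_conj_transpose_absorb[OF assms(2)]
  have "(A ** X)\<^sup>H = A ** X" and "(Y ** B)\<^sup>H = Y ** B"
    using assms unfolding is_mp_inverse_def by auto
  then have herm: "((mat 1 - A ** X) ** (B - A))\<^sup>H = (B\<^sup>H - A\<^sup>H) ** (mat 1 - A ** X)"
    "((B - A) ** (mat 1 - Y ** B))\<^sup>H = (mat 1 - Y ** B) ** (B\<^sup>H - A\<^sup>H)"
    by (simp_all add: conj_transpose_matrix_mult conj_transpose_diff)
  have "A\<^sup>H ** (mat 1 - A ** X) = 0"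
    by (simp add: matrix_diff_ldistrib matrix_mul_assoc absorb_A(1))
  moreover have "Y ** Y\<^sup>H ** ((mat 1 - A ** X) ** (B - A))\<^sup>H
      = Y ** Y\<^sup>H ** B\<^sup>H ** (mat 1 - A ** X) - Y ** Y\<^sup>H ** (A\<^sup>H ** (mat 1 - A ** X))"
    by (simp only: herm matrix_diff_rdistrib[of "B\<^sup>H"] matrix_diff_ldistrib[of "Y ** Y\<^sup>H"]
        matrix_mul_assoc)
  ultimately show "Y ** (mat 1 - A ** X) = Y ** Y\<^sup>H ** ((mat 1 - A ** X) ** (B - A))\<^sup>H"
    by (simp add: absorb_B(3))
  have "(mat 1 - Y ** B) ** B\<^sup>H = 0"
    by (simp add: matrix_diff_rdistrib absorb_B(2))
  moreover have "((B - A) ** (mat 1 - Y ** B))\<^sup>H ** X\<^sup>H ** X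
      = (mat 1 - Y ** B) ** B\<^sup>H ** (X\<^sup>H ** X) - (mat 1 - Y ** B) ** (A\<^sup>H ** X\<^sup>H ** X)"
    unfolding herm by (simp only: matrix_diff_ldistrib matrix_diff_rdistrib matrix_mul_assoc)
  ultimately show "(mat 1 - Y ** B) ** X = - (((B - A) ** (mat 1 - Y ** B))\<^sup>H ** X\<^sup>H ** X)"
    by (simp add: absorb_A(4))
qed

lemma frob_norm_mp_inverse_diff_le:
  assumes "is_mp_inverse A X" and "is_mp_inverse B Y"
  defines "E \<equiv> B - A"
  shows "(frob_norm (Y - X))\<^sup>2 \<le>
     (spec_norm X)^4 * ((frob_norm E)\<^sup>2 - (frob_norm (E ** Y ** B))\<^sup>2)
   + (spec_norm Y)^4 * ((frob_norm E)\<^sup>2 - (frob_norm (A ** X ** E))\<^sup>2)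
   + (frob_norm (Y ** E ** X))\<^sup>2"
proof -
  have P: "is_orth_proj (Y ** B)" and Q: "is_orth_proj (A ** X)"
    using is_mp_inverse_orth_proj assms(1,2) by blast+
  note blocks = is_mp_inverse_diff_blocks[OF assms(1,2), folded E_def]
  note defects = is_mp_inverse_defects[OF assms(1,2), folded E_def]
  have square_le: "u\<^sup>2 \<le> s^4 * v\<^sup>2" if "0 \<le> u" "u \<le> s\<^sup>2 * v" for u s v :: real
    using power_mono[OF that(2,1), of 2] by (simp add: power_mult_distrib flip: power_mult)
  have split: "(frob_norm (Y - X))\<^sup>2 = (frob_norm (Y ** E ** X))\<^sup>2
      + (frob_norm (Y ** (mat 1 - A ** X)))\<^sup>2 + (frob_norm ((mat 1 - Y ** B) ** X))\<^sup>2"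
    using frob_norm_power2_orth_proj_left[OF P, of "Y - X"]
      frob_norm_power2_orth_proj_right[OF Q, of "Y ** B ** (Y - X)"]
    by (simp add: blocks)
  have "frob_norm (Y ** (mat 1 - A ** X)) \<le> (spec_norm Y)\<^sup>2 * frob_norm ((mat 1 - A ** X) ** E)"
    using frob_norm_gram_mult_le[of Y "((mat 1 - A ** X) ** E)\<^sup>H"] by (simp add: defects(1))
  then have bound_Y: "(frob_norm (Y ** (mat 1 - A ** X)))\<^sup>2
      \<le> (spec_norm Y)^4 * ((frob_norm E)\<^sup>2 - (frob_norm (A ** X ** E))\<^sup>2)"
    using square_le[OF frob_norm_nonneg] frob_norm_power2_orth_proj_left[OF Q, of E] by simp
  have "frob_norm ((mat 1 - Y ** B) ** X) \<le> (spec_norm X)\<^sup>2 * frob_norm (E ** (mat 1 - Y ** B))"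
    using frob_norm_mult_gram_le[of "(E ** (mat 1 - Y ** B))\<^sup>H" X]
    by (simp add: defects(2) mult.commute)
  then have bound_X: "(frob_norm ((mat 1 - Y ** B) ** X))\<^sup>2
      \<le> (spec_norm X)^4 * ((frob_norm E)\<^sup>2 - (frob_norm (E ** Y ** B))\<^sup>2)"
    using square_le[OF frob_norm_nonneg] frob_norm_power2_orth_proj_right[OF P, of E]
    by (simp add: matrix_mul_assoc)
  show ?thesis
    using split bound_X bound_Y by linarith
qed

theorem corollary3p3:
  fixes A B :: "complex^'n^'m"
  defines "E \<equiv> B - A"
  defines "\<beta>1 \<equiv> (spec_norm (mp_inverse A))^4 * ((frob_norm E)^2 - (frob_norm (E ** mp_inverse B ** B))^2)
              + (spec_norm (mp_inverse B))^4 * ((frob_norm E)^2 - (frob_norm (A ** mp_inverse A ** E))^2)"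
  defines "\<beta>2 \<equiv> (spec_norm (mp_inverse A))^4 * ((frob_norm E)^2 - (frob_norm (B ** mp_inverse B ** E))^2)
              + (spec_norm (mp_inverse B))^4 * ((frob_norm E)^2 - (frob_norm (E ** mp_inverse A ** A))^2)"
  shows "(frob_norm (mp_inverse B - mp_inverse A))^2 \<le>
           min (\<beta>1 + (frob_norm (mp_inverse B ** E ** mp_inverse A))^2)
               (\<beta>2 + (frob_norm (mp_inverse A ** E ** mp_inverse B))^2)"
proof -
  note X = is_mp_inverse_mp_inverse[of A] and Y = is_mp_inverse_mp_inverse[of B]
  have "(frob_norm (mp_inverse B - mp_inverse A))^2
      \<le> \<beta>1 + (frob_norm (mp_inverse B ** E ** mp_inverse A))^2"
    using frob_norm_mp_inverse_diff_le[OF X Y] unfolding \<beta>1_def E_def by simp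
  moreover have "A - B = - E"
    unfolding E_def by simp
  then have "(frob_norm (mp_inverse B - mp_inverse A))^2
      \<le> \<beta>2 + (frob_norm (mp_inverse A ** E ** mp_inverse B))^2"
    using frob_norm_mp_inverse_diff_le[OF Y X] unfolding \<beta>2_def
    by (simp add: frob_norm_minus_commute matrix_mul_uminus_left matrix_mul_uminus_right)
  ultimately show ?thesis
    by simp
qed

end
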